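(* For every positive integer $n$ there exist a present-bias parameter $b>1$, an instance $G$ with $O(n)$ vertices, and a set $S$ of $2^n$ distinct rewards such that for each reward $R\in S$ placed at $t$ the sophisticated agent (with abandonment) reaches $t$, and the paths it traverses for different rewards in $S$ are pairwise distinct. In particular the number of distinct paths taken as the reward varies is exponential in the size of the graph.
   Context: An instance is a finite directed acyclic graph $G=(V,E)$ with nonnegative edge costs $c(u,v)$, start node $s$ and target node $t$, where $t$ is the unique node with no outgoing edges. Sophisticated agent with bias $b$ and reward $R$ at $t$, which may abandon: process nodes in reverse topological order; $t$ is never abandoned and $C_R(t)=0$. For $u\neq t$, among out-edges $(u,v)$ with $v$ not abandoned let $P(u,v)=b\,c(u,v)+C_R(v)$; if none exists or all have $P(u,v)>R$, $u$ is abandoned; otherwise the agent at $u$ moves to $v^*(u)\in\arg\min P(u,v)$ and $C_R(u)=c(u,v^*(u))+C_R(v^*(u))$. The agent reaches $t$ iff $s$ is not abandoned, following $s,v^*(s),\dots,t$. *)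

theory Defs
  imports Complex_Main
begin

definition is_instance ::
  "nat set \<Rightarrow> (nat \<times> nat) set \<Rightarrow> (nat \<times> nat \<Rightarrow> real) \<Rightarrow> nat \<Rightarrow> nat \<Rightarrow> bool" where
  "is_instance V E c s t \<longleftrightarrow>
     finite V \<and> E \<subseteq> V \<times> V \<and> acyclic E \<and> s \<in> V \<and> t \<in> V \<and>
     (\<forall>e\<in>E. c e \<ge> 0) \<and>
     (\<forall>u\<in>V. (\<not> (\<exists>v. (u, v) \<in> E)) \<longleftrightarrow> u = t)"

text \<open>A consistent outcome of the backward-induction process of the sophisticated agent
  with bias b and reward R (with abandonment): ab is the set of abandoned nodes,
  CR the perceived-free cost C_R, nxt the chosen successor v*(u) (ties broken arbitrarily).\<close>
definition soph_plan ::
  "nat set \<Rightarrow> (nat \<times> nat) set \<Rightarrow> (nat \<times> nat \<Rightarrow> real) \<Rightarrow> nat \<Rightarrow> real \<Rightarrow> real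
   \<Rightarrow> nat set \<Rightarrow> (nat \<Rightarrow> real) \<Rightarrow> (nat \<Rightarrow> nat) \<Rightarrow> bool" where
  "soph_plan V E c t b R ab CR nxt \<longleftrightarrow>
     ab \<subseteq> V \<and> t \<notin> ab \<and> CR t = 0 \<and>
     (\<forall>u\<in>V - {t}.
        let A = {v. (u, v) \<in> E \<and> v \<notin> ab} in
        (u \<in> ab \<longleftrightarrow> (A = {} \<or> (\<forall>v\<in>A. b * c (u, v) + CR v > R))) \<and>
        (u \<notin> ab \<longrightarrow>
            nxt u \<in> A \<and>
            (\<forall>v\<in>A. b * c (u, nxt u) + CR (nxt u) \<le> b * c (u, v) + CR v) \<and>
            CR u = c (u, nxt u) + CR (nxt u)))"

definition agent_path :: "(nat \<Rightarrow> nat) \<Rightarrow> nat \<Rightarrow> nat \<Rightarrow> nat list" where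
  "agent_path nxt s t = map (\<lambda>i. (nxt ^^ i) s) [0..<Suc (LEAST k. (nxt ^^ k) s = t)]"

end

theory Submission
  imports Defs
begin

text \<open>The instance is a chain of n gadgets from s = 2n down to t = 0: at 2j+2 the agent either
  takes a direct edge to 2j or a free edge to 2j+1, from which a detour edge leads to 2j.
  With bias 2 the vertex 2j+1 survives exactly when the slack R - C_R(2j) is at least twice
  the detour cost, and then 2j+2 prefers the detour. The slack at 2j lies in a window of width
  2^(n-j+1), and each gadget maps the upper or the lower half of it onto the next window, so for
  R = 4 * 2^n + 2k the gadget choices are the binary digits of k. Conversely the path fixes the
  choices, hence C_R(s), and thereby R up to an error less than 2.\<close>

lemma soph_plan_abandoned_iff:
  assumes "soph_plan V E c t b R ab CR nxt" "u \<in> V" "u \<noteq> t"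
  shows "u \<in> ab \<longleftrightarrow> (\<forall>v. (u, v) \<in> E \<and> v \<notin> ab \<longrightarrow> b * c (u, v) + CR v > R)"
  using assms unfolding soph_plan_def Let_def by auto

lemma soph_plan_next:
  assumes "soph_plan V E c t b R ab CR nxt" "u \<in> V" "u \<noteq> t" "u \<notin> ab"
  shows "(u, nxt u) \<in> E" "nxt u \<notin> ab"
    "\<And>v. (u, v) \<in> E \<Longrightarrow> v \<notin> ab \<Longrightarrow> b * c (u, nxt u) + CR (nxt u) \<le> b * c (u, v) + CR v"
    "CR u = c (u, nxt u) + CR (nxt u)"
  using assms unfolding soph_plan_def Let_def by auto

lemma soph_planI:
  assumes "ab \<subseteq> V" "t \<notin> ab" "CR t = 0"
    and "\<And>u. u \<in> V \<Longrightarrow> u \<noteq> t \<Longrightarrow>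
           u \<in> ab \<longleftrightarrow> (\<forall>v. (u, v) \<in> E \<and> v \<notin> ab \<longrightarrow> b * c (u, v) + CR v > R)"
    and "\<And>u. u \<in> V \<Longrightarrow> u \<noteq> t \<Longrightarrow> u \<notin> ab \<Longrightarrow>
           (u, nxt u) \<in> E \<and> nxt u \<notin> ab \<and>
           (\<forall>v. (u, v) \<in> E \<and> v \<notin> ab \<longrightarrow> b * c (u, nxt u) + CR (nxt u) \<le> b * c (u, v) + CR v) \<and>
           CR u = c (u, nxt u) + CR (nxt u)"
  shows "soph_plan V E c t b R ab CR nxt"
  unfolding soph_plan_def Let_def
proof (intro conjI ballI)
  fix u assume u: "u \<in> V - {t}"
  show "(u \<in> ab) = ({v. (u, v) \<in> E \<and> v \<notin> ab} = {} \<or>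
          (\<forall>v\<in>{v. (u, v) \<in> E \<and> v \<notin> ab}. R < b * c (u, v) + CR v))"
    using assms(4)[of u] u by auto
  show "u \<notin> ab \<longrightarrow> nxt u \<in> {v. (u, v) \<in> E \<and> v \<notin> ab} \<and>
         (\<forall>v\<in>{v. (u, v) \<in> E \<and> v \<notin> ab}. b * c (u, nxt u) + CR (nxt u) \<le> b * c (u, v) + CR v) \<and>
         CR u = c (u, nxt u) + CR (nxt u)"
    using assms(5)[of u] u by auto
qed (use assms in auto)

lemma soph_plan_orbit_not_abandoned:
  assumes "soph_plan V E c t b R ab CR nxt" "E \<subseteq> V \<times> V" "s \<in> V" "s \<notin> ab"
    and "\<forall>l<k. (nxt ^^ l) s \<noteq> t"
  shows "(nxt ^^ k) s \<in> V \<and> (nxt ^^ k) s \<notin> ab"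
  using assms(5)
proof (induction k)
  case (Suc k)
  then have "(nxt ^^ k) s \<in> V" "(nxt ^^ k) s \<noteq> t" "(nxt ^^ k) s \<notin> ab" by auto
  from soph_plan_next(1,2)[OF assms(1) this] assms(2) show ?case by auto
qed (use assms in simp)

lemma set_agent_path:
  assumes "(nxt ^^ k) s = t" "\<forall>l<k. (nxt ^^ l) s \<noteq> t"
  shows "set (agent_path nxt s t) = (\<lambda>i. (nxt ^^ i) s) ` {..k}"
proof -
  have least: "(LEAST k. (nxt ^^ k) s = t) = k"
    by (rule Least_equality) (use assms in \<open>auto simp: not_less[symmetric]\<close>)
  show ?thesis
    unfolding agent_path_def least by (simp add: atLeast0LessThan lessThan_Suc_atMost del: upt_Suc)
qed

context
  fixes n :: nat
begin

definition chain_vertices :: "nat set" where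
  "chain_vertices = {0..2*n}"

definition chain_edges :: "(nat \<times> nat) set" where
  "chain_edges = (\<Union>j<n. {(2*j+2, 2*j), (2*j+2, 2*j+1), (2*j+1, 2*j)})"

definition scale :: "nat \<Rightarrow> real" where
  "scale j = 2 ^ n / 2 ^ j"

definition slack_lb :: "nat \<Rightarrow> real" where
  "slack_lb j = (real j + 4) * scale j"

definition detour_cost :: "nat \<Rightarrow> real" where
  "detour_cost j = (real j + 5) * scale j / 2"

definition direct_cost :: "nat \<Rightarrow> real" where
  "direct_cost j = (real j + 3) * scale j / 2"

definition chain_cost :: "nat \<times> nat \<Rightarrow> real" where
  "chain_cost e =
     (if odd (fst e) then detour_cost (fst e div 2)
      else if odd (snd e) then 0 else direct_cost (fst e div 2 - 1))"

lemma chain_edge_from_even [simp]: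
  "(Suc (Suc (2*j)), v) \<in> chain_edges \<longleftrightarrow> j < n \<and> (v = 2*j \<or> v = Suc (2*j))"
  unfolding chain_edges_def by (auto; presburger)

lemma chain_edge_from_odd [simp]:
  "(Suc (2*j), v) \<in> chain_edges \<longleftrightarrow> j < n \<and> v = 2*j"
  unfolding chain_edges_def by (auto; presburger)

lemma chain_edge_to_odd:
  "(u, Suc (2*j)) \<in> chain_edges \<longleftrightarrow> j < n \<and> u = Suc (Suc (2*j))"
  unfolding chain_edges_def by (auto; presburger)

lemma chain_cost_simps [simp]:
  "chain_cost (Suc (Suc (2*j)), 2*j) = direct_cost j"
  "chain_cost (Suc (Suc (2*j)), Suc (2*j)) = 0"
  "chain_cost (Suc (2*j), 2*j) = detour_cost j"
  by (simp_all add: chain_cost_def)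

lemma chain_edge_decreasing: "(u, v) \<in> chain_edges \<Longrightarrow> v < u"
  unfolding chain_edges_def by auto

lemma chain_edges_subset: "chain_edges \<subseteq> chain_vertices \<times> chain_vertices"
  unfolding chain_edges_def chain_vertices_def by auto

lemma chain_vertex_cases:
  assumes "u \<in> chain_vertices" "u \<noteq> 0"
  obtains j where "j < n" "u = Suc (2*j) \<or> u = Suc (Suc (2*j))"
proof -
  have "\<exists>j<n. u = Suc (2*j) \<or> u = Suc (Suc (2*j))"
    using assms unfolding chain_vertices_def by (cases "even u") (auto elim!: evenE oddE, presburger+)
  then show thesis using that by blast
qed

lemma is_instance_chain: "is_instance chain_vertices chain_edges chain_cost (2*n) 0"
  unfolding is_instance_def
proof (intro conjI ballI)
  have "(u, v) \<in> chain_edges\<^sup>+ \<Longrightarrow> v < u" for u v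
    by (induction rule: trancl_induct) (auto dest: chain_edge_decreasing)
  then show "acyclic chain_edges"
    unfolding acyclic_def by blast
  show "0 \<le> chain_cost e" if "e \<in> chain_edges" for e
    using that unfolding chain_edges_def
    by (auto simp: chain_cost_def detour_cost_def direct_cost_def scale_def)
  show "(\<nexists>v. (u, v) \<in> chain_edges) \<longleftrightarrow> u = 0" if "u \<in> chain_vertices" for u
  proof (cases "u = 0")
    case False
    with that obtain j where "j < n" "u = Suc (2*j) \<or> u = Suc (Suc (2*j))"
      by (rule chain_vertex_cases)
    with False show ?thesis by auto
  qed (auto dest: chain_edge_decreasing)
qed (use chain_edges_subset in \<open>auto simp: chain_vertices_def\<close>)

lemma scale_pos: "scale j > 0"
  by (simp add: scale_def)

lemma scale_Suc: "scale (Suc j) = scale j / 2"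
  by (simp add: scale_def)

lemma double_detour_cost: "2 * detour_cost j = slack_lb j + scale j"
  by (simp add: detour_cost_def slack_lb_def algebra_simps)

lemma double_direct_cost: "2 * direct_cost j = slack_lb j - scale j"
  by (simp add: direct_cost_def slack_lb_def algebra_simps)

lemma detour_cost_less: "detour_cost j < 2 * direct_cost j"
  using scale_pos[of j] by (simp add: detour_cost_def direct_cost_def field_simps add_pos_nonneg)

lemma slack_lb_Suc_detour: "slack_lb (Suc j) = slack_lb j + scale j - detour_cost j"
  by (simp add: slack_lb_def detour_cost_def scale_Suc field_simps)

lemma slack_lb_Suc_direct: "slack_lb (Suc j) = slack_lb j - direct_cost j"
  by (simp add: slack_lb_def direct_cost_def scale_Suc field_simps)

abbreviation chain_plan :: "real \<Rightarrow> nat set \<Rightarrow> (nat \<Rightarrow> real) \<Rightarrow> (nat \<Rightarrow> nat) \<Rightarrow> bool" where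
  "chain_plan R ab CR nxt \<equiv> soph_plan chain_vertices chain_edges chain_cost 0 2 R ab CR nxt"

definition slack_window :: "nat \<Rightarrow> real set" where
  "slack_window j = {slack_lb j ..< slack_lb j + 2 * scale j}"

lemma detour_node:
  assumes P: "chain_plan R ab CR nxt" and j: "j < n" and "2*j \<notin> ab"
  shows "2*j+1 \<notin> ab \<longleftrightarrow> slack_lb j + scale j \<le> R - CR (2*j)"
    and "2*j+1 \<notin> ab \<Longrightarrow> CR (2*j+1) = CR (2*j) + detour_cost j"
proof -
  have V: "2*j+1 \<in> chain_vertices" "2*j+1 \<noteq> 0"
    using j by (auto simp: chain_vertices_def)
  show "2*j+1 \<notin> ab \<longleftrightarrow> slack_lb j + scale j \<le> R - CR (2*j)"
    using soph_plan_abandoned_iff[OF P V] assms double_detour_cost[of j] by auto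
  assume "2*j+1 \<notin> ab"
  with soph_plan_next(1,4)[OF P V] j show "CR (2*j+1) = CR (2*j) + detour_cost j"
    by auto
qed

lemma gadget_step:
  assumes P: "chain_plan R ab CR nxt" and j: "j < n"
    and start: "2*j \<notin> ab" and window: "R - CR (2*j) \<in> slack_window j"
  shows "2*j+2 \<notin> ab" "R - CR (2*j+2) \<in> slack_window (Suc j)"
    "CR (2*j+2) = CR (2*j) + (if nxt (2*j+2) = 2*j+1 then detour_cost j else direct_cost j)"
proof -
  have V: "2*j+2 \<in> chain_vertices" "2*j+2 \<noteq> 0"
    using j by (auto simp: chain_vertices_def)
  note abandoned_iff = soph_plan_abandoned_iff[OF P V]
  note succ = soph_plan_next[OF P V]
  note costs = double_detour_cost[of j] double_direct_cost[of j] detour_cost_less[of j]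
    slack_lb_Suc_detour[of j] slack_lb_Suc_direct[of j] scale_Suc[of j] scale_pos[of j]
  have "2*j+2 \<notin> ab \<and> R - CR (2*j+2) \<in> slack_window (Suc j) \<and>
    CR (2*j+2) = CR (2*j) + (if nxt (2*j+2) = 2*j+1 then detour_cost j else direct_cost j)"
  proof (cases "slack_lb j + scale j \<le> R - CR (2*j)")
    case True
    then have odd_ok: "2*j+1 \<notin> ab" and CR_odd: "CR (2*j+1) = CR (2*j) + detour_cost j"
      using detour_node[OF P j start] by auto
    then have even_ok: "2*j+2 \<notin> ab"
      using abandoned_iff j True costs by auto
    then have "nxt (2*j+2) = 2*j \<or> nxt (2*j+2) = 2*j+1"
      using succ(1) by simp
    moreover have "nxt (2*j+2) \<noteq> 2*j"
      using succ(3)[OF even_ok, of "2*j+1"] odd_ok CR_odd j costs by auto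
    ultimately have "nxt (2*j+2) = 2*j+1" by blast
    then show ?thesis
      using even_ok succ(4)[OF even_ok] CR_odd True window costs
      by (auto simp: slack_window_def)
  next
    case False
    then have odd_ab: "2*j+1 \<in> ab"
      using detour_node[OF P j start] by auto
    have even_ok: "2*j+2 \<notin> ab"
      using abandoned_iff j start window costs by (auto simp: slack_window_def)
    then have "nxt (2*j+2) = 2*j"
      using succ(1,2) odd_ab by auto
    then show ?thesis
      using even_ok succ(4)[OF even_ok] False window costs
      by (auto simp: slack_window_def)
  qed
  then show "2*j+2 \<notin> ab" "R - CR (2*j+2) \<in> slack_window (Suc j)"
    "CR (2*j+2) = CR (2*j) + (if nxt (2*j+2) = 2*j+1 then detour_cost j else direct_cost j)"
    by blast+
qed

lemma plan_slack_window:
  assumes P: "chain_plan R ab CR nxt" and R: "R \<in> slack_window 0" and "j \<le> n"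
  shows "2*j \<notin> ab \<and> R - CR (2*j) \<in> slack_window j"
  using \<open>j \<le> n\<close>
proof (induction j)
  case 0
  then show ?case using P R unfolding soph_plan_def by simp
next
  case (Suc j)
  then have "2*j+2 \<notin> ab \<and> R - CR (2*j+2) \<in> slack_window (Suc j)"
    using gadget_step[OF P] by simp
  then show ?case by simp
qed

lemma plan_cost_step:
  assumes P: "chain_plan R ab CR nxt" and R: "R \<in> slack_window 0" and "j < n"
  shows "CR (2*j+2) = CR (2*j) + (if nxt (2*j+2) = 2*j+1 then detour_cost j else direct_cost j)"
  using gadget_step(3)[OF P \<open>j < n\<close>] plan_slack_window[OF P R, of j] \<open>j < n\<close> by simp

text \<open>The slack R - C_R(2j) that gadget_step forces on every plan, in closed form; the witness
  plan below is read off from it.\<close>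
fun planned_slack :: "real \<Rightarrow> nat \<Rightarrow> real" where
  "planned_slack R 0 = R"
| "planned_slack R (Suc j) = planned_slack R j -
     (if slack_lb j + scale j \<le> planned_slack R j then detour_cost j else direct_cost j)"

definition takes_detour :: "real \<Rightarrow> nat \<Rightarrow> bool" where
  "takes_detour R j \<longleftrightarrow> slack_lb j + scale j \<le> planned_slack R j"

definition canonical_abandoned :: "real \<Rightarrow> nat set" where
  "canonical_abandoned R = {2*j+1 | j. j < n \<and> \<not> takes_detour R j}"

definition canonical_cost :: "real \<Rightarrow> nat \<Rightarrow> real" where
  "canonical_cost R u = R - planned_slack R (u div 2) + (if odd u then detour_cost (u div 2) else 0)"

definition canonical_next :: "real \<Rightarrow> nat \<Rightarrow> nat" where
  "canonical_next R u = (if odd u \<or> takes_detour R (u div 2 - 1) then u - 1 else u - 2)"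

lemma planned_slack_window:
  assumes "R \<in> slack_window 0"
  shows "planned_slack R j \<in> slack_window j"
proof (induction j)
  case (Suc j)
  then show ?case
    using slack_lb_Suc_detour[of j] slack_lb_Suc_direct[of j] scale_Suc[of j]
      double_detour_cost[of j] double_direct_cost[of j]
    by (auto simp: slack_window_def)
qed (use assms in simp)

lemma canonical_plan:
  assumes R: "R \<in> slack_window 0"
  shows "chain_plan R (canonical_abandoned R) (canonical_cost R) (canonical_next R)"
proof (rule soph_planI)
  show "canonical_abandoned R \<subseteq> chain_vertices" "0 \<notin> canonical_abandoned R"
    unfolding canonical_abandoned_def chain_vertices_def by auto
  show "canonical_cost R 0 = 0"
    by (simp add: canonical_cost_def)
  fix u assume u: "u \<in> chain_vertices" "u \<noteq> 0"
  then obtain j where j: "j < n" "u = Suc (2*j) \<or> u = Suc (Suc (2*j))"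
    by (rule chain_vertex_cases)
  have abandoned:
    "Suc (2*i) \<in> canonical_abandoned R \<longleftrightarrow> i < n \<and> \<not> takes_detour R i"
    "2*i \<notin> canonical_abandoned R" "Suc (Suc (2*i)) \<notin> canonical_abandoned R" for i
    unfolding canonical_abandoned_def by (auto, presburger+)
  have costs: "canonical_cost R (2*j) = R - planned_slack R j"
    "canonical_cost R (Suc (2*j)) = R - planned_slack R j + detour_cost j"
    "canonical_cost R (Suc (Suc (2*j))) = R - planned_slack R (Suc j)"
    by (simp_all add: canonical_cost_def)
  have nexts: "canonical_next R (Suc (2*j)) = 2*j"
    "canonical_next R (Suc (Suc (2*j))) = (if takes_detour R j then Suc (2*j) else 2*j)"
    by (simp_all add: canonical_next_def)
  note facts = j abandoned costs nexts planned_slack_window[OF R, of j]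
    double_detour_cost[of j] double_direct_cost[of j] detour_cost_less[of j] scale_pos[of j]
  show "u \<in> canonical_abandoned R \<longleftrightarrow> (\<forall>v. (u, v) \<in> chain_edges \<and> v \<notin> canonical_abandoned R
          \<longrightarrow> 2 * chain_cost (u, v) + canonical_cost R v > R)"
    using facts by (auto simp: takes_detour_def slack_window_def)
  show "(u, canonical_next R u) \<in> chain_edges \<and> canonical_next R u \<notin> canonical_abandoned R \<and>
      (\<forall>v. (u, v) \<in> chain_edges \<and> v \<notin> canonical_abandoned R \<longrightarrow>
         2 * chain_cost (u, canonical_next R u) + canonical_cost R (canonical_next R u)
         \<le> 2 * chain_cost (u, v) + canonical_cost R v) \<and>
      canonical_cost R u = chain_cost (u, canonical_next R u) + canonical_cost R (canonical_next R u)"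
    if "u \<notin> canonical_abandoned R"
    using that facts by (auto simp: takes_detour_def slack_window_def split: if_splits)
qed

lemma agent_reaches_even_vertices:
  assumes P: "chain_plan R ab CR nxt" and start: "2*n \<notin> ab" and "j \<le> n"
  shows "\<exists>k. (nxt ^^ k) (2*n) = 2*j \<and> (\<forall>l<k. (nxt ^^ l) (2*n) \<noteq> 0)"
  using \<open>j \<le> n\<close>
proof (induction j rule: inc_induct)
  case (step j)
  then obtain k where k: "(nxt ^^ k) (2*n) = 2*j+2" "\<forall>l<k. (nxt ^^ l) (2*n) \<noteq> 0"
    by auto
  have orbit: "(nxt ^^ i) (2*n) \<notin> ab" if "\<forall>l<i. (nxt ^^ l) (2*n) \<noteq> 0" for i
    using soph_plan_orbit_not_abandoned[OF P chain_edges_subset _ start that]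
    by (simp add: chain_vertices_def)
  have V: "2*j+2 \<in> chain_vertices" "2*j+2 \<noteq> 0" "2*j+1 \<in> chain_vertices" "2*j+1 \<noteq> 0"
    using step.hyps by (auto simp: chain_vertices_def)
  have "2*j+2 \<notin> ab" using orbit[OF k(2)] k(1) by simp
  then have "nxt (2*j+2) = 2*j \<or> nxt (2*j+2) = 2*j+1"
    using soph_plan_next(1)[OF P V(1,2)] by simp
  then show ?case
  proof
    assume "nxt (2*j+2) = 2*j"
    then show ?case
      using k by (intro exI[of _ "Suc k"]) (auto simp: less_Suc_eq)
  next
    assume detour: "nxt (2*j+2) = 2*j+1"
    then have before: "\<forall>l<Suc k. (nxt ^^ l) (2*n) \<noteq> 0" and at: "(nxt ^^ Suc k) (2*n) = 2*j+1"
      using k by (auto simp: less_Suc_eq)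
    then have "2*j+1 \<notin> ab" using orbit[OF before] by simp
    then have "nxt (2*j+1) = 2*j"
      using soph_plan_next(1)[OF P V(3,4)] by simp
    then show ?case
      using before at by (intro exI[of _ "Suc (Suc k)"]) (auto simp: less_Suc_eq)
  qed
qed (rule exI[of _ 0], simp)

lemma agent_path_visits_detour:
  assumes P: "chain_plan R ab CR nxt" and start: "2*n \<notin> ab" and j: "j < n"
  shows "2*j+1 \<in> set (agent_path nxt (2*n) 0) \<longleftrightarrow> nxt (2*j+2) = 2*j+1"
proof -
  obtain k where k: "(nxt ^^ k) (2*n) = 0" "\<forall>l<k. (nxt ^^ l) (2*n) \<noteq> 0"
    using agent_reaches_even_vertices[OF P start, of 0] by auto
  have orbit: "(nxt ^^ i) (2*n) \<in> chain_vertices \<and> (nxt ^^ i) (2*n) \<notin> ab" if "i < k" for i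
    using soph_plan_orbit_not_abandoned[OF P chain_edges_subset _ start] k(2) that
    by (simp add: chain_vertices_def)
  show ?thesis
  proof
    assume "2*j+1 \<in> set (agent_path nxt (2*n) 0)"
    then obtain i where i: "i \<le> k" "(nxt ^^ i) (2*n) = 2*j+1"
      unfolding set_agent_path[OF k] by auto
    moreover have "i \<noteq> 0"
    proof
      assume "i = 0"
      with i(2) have "2*n = 2*j+1" by simp
      then show False by presburger
    qed
    ultimately obtain m where m: "i = Suc m" "m < k"
      using not0_implies_Suc by fastforce
    then have "((nxt ^^ m) (2*n), 2*j+1) \<in> chain_edges"
      using soph_plan_next(1)[of _ _ _ 0 _ R ab CR nxt "(nxt ^^ m) (2*n)"] P orbit[of m] k(2) i(2)
      by auto
    then have "(nxt ^^ m) (2*n) = 2*j+2"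
      using chain_edge_to_odd by simp
    then show "nxt (2*j+2) = 2*j+1"
      using i(2) m(1) by simp
  next
    assume detour: "nxt (2*j+2) = 2*j+1"
    obtain i where i: "(nxt ^^ i) (2*n) = 2*j+2" "\<forall>l<i. (nxt ^^ l) (2*n) \<noteq> 0"
      using agent_reaches_even_vertices[OF P start, of "Suc j"] j by auto
    have "i < k"
      using i k by (metis linorder_neqE_nat nat.distinct(1) add_2_eq_Suc')
    then show "2*j+1 \<in> set (agent_path nxt (2*n) 0)"
      unfolding set_agent_path[OF k] using i(1) detour
      by (intro image_eqI[of _ _ "Suc i"]) auto
  qed
qed

lemma plan_costs_determined_by_choices:
  assumes P1: "chain_plan R1 ab1 CR1 nxt1" and R1: "R1 \<in> slack_window 0"
    and P2: "chain_plan R2 ab2 CR2 nxt2" and R2: "R2 \<in> slack_window 0"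
    and same: "\<forall>j<n. nxt1 (2*j+2) = 2*j+1 \<longleftrightarrow> nxt2 (2*j+2) = 2*j+1"
    and "j \<le> n"
  shows "CR1 (2*j) = CR2 (2*j)"
  using \<open>j \<le> n\<close>
proof (induction j)
  case 0
  then show ?case using P1 P2 unfolding soph_plan_def by simp
next
  case (Suc j)
  then have "CR1 (2*j+2) = CR2 (2*j+2)"
    using plan_cost_step[OF P1 R1, of j] plan_cost_step[OF P2 R2, of j] same by simp
  then show ?case by simp
qed

lemma same_agent_path_close_rewards:
  assumes P1: "chain_plan R1 ab1 CR1 nxt1" and R1: "R1 \<in> slack_window 0"
    and P2: "chain_plan R2 ab2 CR2 nxt2" and R2: "R2 \<in> slack_window 0"
    and path: "agent_path nxt1 (2*n) 0 = agent_path nxt2 (2*n) 0"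
  shows "\<bar>R1 - R2\<bar> < 2"
proof -
  have end1: "2*n \<notin> ab1" "R1 - CR1 (2*n) \<in> slack_window n"
    using plan_slack_window[OF P1 R1, of n] by auto
  have end2: "2*n \<notin> ab2" "R2 - CR2 (2*n) \<in> slack_window n"
    using plan_slack_window[OF P2 R2, of n] by auto
  have "\<forall>j<n. nxt1 (2*j+2) = 2*j+1 \<longleftrightarrow> nxt2 (2*j+2) = 2*j+1"
    using agent_path_visits_detour[OF P1 end1(1)] agent_path_visits_detour[OF P2 end2(1)] path
    by simp
  then have "CR1 (2*n) = CR2 (2*n)"
    using plan_costs_determined_by_choices[OF P1 R1 P2 R2] by simp
  moreover have "scale n = 1"
    by (simp add: scale_def)
  ultimately show ?thesis
    using end1(2) end2(2) by (auto simp: slack_window_def)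
qed

definition rewards :: "real set" where
  "rewards = (\<lambda>k. 4 * 2^n + 2 * real k) ` {..<2^n}"

lemma card_rewards: "card rewards = 2^n"
  unfolding rewards_def by (simp add: card_image inj_on_def)

lemma rewards_window: "R \<in> rewards \<Longrightarrow> R \<in> slack_window 0"
proof -
  assume "R \<in> rewards"
  then obtain k :: nat where "k < 2^n" "R = 4 * 2^n + 2 * real k"
    unfolding rewards_def by blast
  moreover from this(1) have "real k < 2^n"
    by (metis of_nat_less_iff of_nat_numeral of_nat_power)
  ultimately show ?thesis
    by (simp add: slack_window_def slack_lb_def scale_def)
qed

lemma rewards_spaced:
  assumes "R1 \<in> rewards" "R2 \<in> rewards" "R1 \<noteq> R2"
  shows "2 \<le> \<bar>R1 - R2\<bar>"
proof -
  from assms obtain k1 k2 :: nat where "R1 = 4 * 2^n + 2 * real k1" "R2 = 4 * 2^n + 2 * real k2"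
    unfolding rewards_def by blast
  moreover from assms calculation have "k1 \<noteq> k2" by auto
  then have "real k1 + 1 \<le> real k2 \<or> real k2 + 1 \<le> real k1" by linarith
  ultimately show ?thesis by linarith
qed

lemma card_chain_vertices: "n \<ge> 1 \<Longrightarrow> real (card chain_vertices) \<le> 3 * real n"
  by (simp add: chain_vertices_def)

end

theorem theorem3:
  shows "\<exists>K::real. \<forall>n::nat. n \<ge> 1 \<longrightarrow>
    (\<exists>b V E c s t S.
       b > 1 \<and> is_instance V E c s t \<and> real (card V) \<le> K * real n \<and>
       finite S \<and> card S = 2 ^ n \<and>
       (\<forall>R\<in>S. (\<exists>ab CR nxt. soph_plan V E c t b R ab CR nxt) \<and>
               (\<forall>ab CR nxt. soph_plan V E c t b R ab CR nxt \<longrightarrow> s \<notin> ab)) \<and>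
       (\<forall>R1\<in>S. \<forall>R2\<in>S. R1 \<noteq> R2 \<longrightarrow>
          (\<forall>ab1 CR1 nxt1 ab2 CR2 nxt2.
             soph_plan V E c t b R1 ab1 CR1 nxt1 \<longrightarrow> soph_plan V E c t b R2 ab2 CR2 nxt2 \<longrightarrow>
             agent_path nxt1 s t \<noteq> agent_path nxt2 s t)))"
proof (rule exI[of _ 3], intro allI impI, goal_cases)
  case (1 n)
  have "\<forall>R\<in>rewards n. (\<exists>ab CR nxt. chain_plan n R ab CR nxt) \<and>
      (\<forall>ab CR nxt. chain_plan n R ab CR nxt \<longrightarrow> 2*n \<notin> ab)"
    using canonical_plan[OF rewards_window] plan_slack_window[OF _ rewards_window, of _ _ _ _ _ n]
    by blast
  moreover have "\<forall>R1\<in>rewards n. \<forall>R2\<in>rewards n. R1 \<noteq> R2 \<longrightarrow>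
      (\<forall>ab1 CR1 nxt1 ab2 CR2 nxt2. chain_plan n R1 ab1 CR1 nxt1 \<longrightarrow> chain_plan n R2 ab2 CR2 nxt2 \<longrightarrow>
         agent_path nxt1 (2*n) 0 \<noteq> agent_path nxt2 (2*n) 0)"
    using same_agent_path_close_rewards[OF _ rewards_window _ rewards_window] rewards_spaced
    by fastforce
  ultimately show ?case
    using is_instance_chain[of n] card_chain_vertices[OF 1] card_rewards[of n]
    by (intro exI[of _ 2] exI[of _ "chain_vertices n"] exI[of _ "chain_edges n"]
        exI[of _ "chain_cost n"] exI[of _ "2*n"] exI[of _ 0] exI[of _ "rewards n"])
      (simp add: rewards_def)
qed

end
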